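(* Let $\bm H_S$ be a finite-dimensional Hilbert space, $\rho$ a density operator on $\bm H_S$, and $\{E_b\}_{b\in B}$ a POVM on $\bm H_S$ with finite outcome set $B$. Put $p(b):=\mathrm{tr}[E_b\rho]$ and, for $p(b)>0$, $\rho_b:=\sqrt{E_b}\,\rho\,\sqrt{E_b}/p(b)$. Let $\bm H_R$ be a finite-dimensional Hilbert space and $|\Psi\rangle\in\bm H_S\otimes\bm H_R$ a purification of $\rho$, i.e. $\mathrm{tr}_R[|\Psi\rangle\langle\Psi|]=\rho$. Define $\rho^R:=\mathrm{tr}_S[|\Psi\rangle\langle\Psi|]$ and, for $p(b)>0$, $\rho^R_b:=\mathrm{tr}_S[(\sqrt{E_b}\otimes I^R)|\Psi\rangle\langle\Psi|(\sqrt{E_b}\otimes I^R)]/p(b)$, where $I^R$ is the identity on $\bm H_R$. Then $$S(\rho)-\sum_b p(b)\,S(\rho_b)=S(\rho^R)-\sum_b p(b)\,S(\rho^R_b),$$ where the sums range over $b$ with $p(b)>0$. That is, the QC-mutual information $I^{S:B}_{\rm QC}$ equals the $\chi$-quantity $\chi^{BR}$ of the ensemble $\{p(b),\rho^R_b\}$.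
   Context: A POVM is a family $\{E_b\}$ of positive operators with $\sum_b E_b=I$. $S(\sigma):=-\mathrm{tr}[\sigma\ln\sigma]$ is the von Neumann entropy (with $0\ln 0=0$). The QC-mutual information is $I^{S:B}_{\rm QC}:=S(\rho)-\sum_b p(b)S(\rho_b)$, and the $\chi$-quantity of an ensemble $\{p(b),\sigma_b\}$ with $\sigma=\sum_b p(b)\sigma_b$ is $S(\sigma)-\sum_b p(b)S(\sigma_b)$; note $\rho^R=\sum_b p(b)\rho^R_b$. *)

theory Defs
  imports "Jordan_Normal_Form.Char_Poly" "Jordan_Normal_Form.Conjugate"
    "HOL-Computational_Algebra.Fundamental_Theorem_Algebra"
begin

text \<open>Finite-dimensional Hilbert spaces are modelled as C^n; operators as complex n x n
  matrices (type complex mat with carrier_mat n n).  The tensor product C^n (x) C^m is C^(n*m),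
  with basis vector e_i (x) f_j identified with the basis vector of index i*m+j.\<close>

definition adj :: "complex mat \<Rightarrow> complex mat" where
  "adj A = mat (dim_col A) (dim_row A) (\<lambda>(i,j). cnj (A $$ (j,i)))"

definition hermitian :: "complex mat \<Rightarrow> bool" where
  "hermitian A \<longleftrightarrow> adj A = A"

definition psd :: "nat \<Rightarrow> complex mat \<Rightarrow> bool" where
  "psd n A \<longleftrightarrow> A \<in> carrier_mat n n \<and> hermitian A \<and>
     (\<forall>v \<in> carrier_vec n. Im (scalar_prod (conjugate v) (A *\<^sub>v v)) = 0 \<and> 0 \<le> Re (scalar_prod (conjugate v) (A *\<^sub>v v)))"

definition mtrace :: "complex mat \<Rightarrow> complex" where
  "mtrace A = (\<Sum>i<dim_row A. A $$ (i,i))"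

definition density_op :: "nat \<Rightarrow> complex mat \<Rightarrow> bool" where
  "density_op n \<rho> \<longleftrightarrow> psd n \<rho> \<and> mtrace \<rho> = 1"

definition msum :: "nat \<Rightarrow> 'b set \<Rightarrow> ('b \<Rightarrow> complex mat) \<Rightarrow> complex mat" where
  "msum n B f = mat n n (\<lambda>(i,j). \<Sum>b\<in>B. f b $$ (i,j))"

definition povm :: "nat \<Rightarrow> 'b set \<Rightarrow> ('b \<Rightarrow> complex mat) \<Rightarrow> bool" where
  "povm n B E \<longleftrightarrow> finite B \<and> (\<forall>b\<in>B. psd n (E b)) \<and> msum n B E = 1\<^sub>m n"

definition mat_sqrt :: "complex mat \<Rightarrow> complex mat" where
  "mat_sqrt A = (THE R. psd (dim_row A) R \<and> R * R = A)"

text \<open>von Neumann entropy S(sigma) = -tr[sigma ln sigma] = - sum over the eigenvalues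
  (with algebraic multiplicity, i.e. the roots of the characteristic polynomial) of
  lambda ln lambda, with 0 ln 0 = 0\<close>
definition xlnx :: "real \<Rightarrow> real" where
  "xlnx x = (if x = 0 then 0 else x * ln x)"

definition vn_entropy :: "complex mat \<Rightarrow> real" where
  "vn_entropy \<sigma> = - (\<Sum>x\<in># proots (char_poly \<sigma>). xlnx (Re x))"

definition prob :: "('b \<Rightarrow> complex mat) \<Rightarrow> complex mat \<Rightarrow> 'b \<Rightarrow> real" where
  "prob E \<rho> b = Re (mtrace (E b * \<rho>))"

definition tensor_mat :: "complex mat \<Rightarrow> complex mat \<Rightarrow> complex mat" where
  "tensor_mat A C = mat (dim_row A * dim_row C) (dim_col A * dim_col C)
     (\<lambda>(r,c). A $$ (r div dim_row C, c div dim_col C) * C $$ (r mod dim_row C, c mod dim_col C))"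

definition proj :: "complex vec \<Rightarrow> complex mat" where
  "proj \<psi> = mat (dim_vec \<psi>) (dim_vec \<psi>) (\<lambda>(i,j). \<psi> $ i * cnj (\<psi> $ j))"

definition ptrace_R :: "nat \<Rightarrow> nat \<Rightarrow> complex mat \<Rightarrow> complex mat" where
  "ptrace_R n m M = mat n n (\<lambda>(i,k). \<Sum>j<m. M $$ (i*m+j, k*m+j))"

definition ptrace_S :: "nat \<Rightarrow> nat \<Rightarrow> complex mat \<Rightarrow> complex mat" where
  "ptrace_S n m M = mat m m (\<lambda>(j,l). \<Sum>i<n. M $$ (i*m+j, i*m+l))"

end

theory Submission
  imports Defs "Jordan_Normal_Form.Schur_Decomposition"
begin

text \<open>Write the purification as \<open>\<Psi> = \<Sum>\<^sub>i\<^sub>j Y\<^sub>i\<^sub>j e\<^sub>i \<otimes> f\<^sub>j\<close> with an \<open>n \<times> m\<close>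
  coefficient matrix \<open>Y\<close>. Then \<open>tr\<^sub>R |\<Psi>\<rangle>\<langle>\<Psi>| = Y Y\<^sup>\<dagger>\<close> and
  \<open>tr\<^sub>S |\<Psi>\<rangle>\<langle>\<Psi>| = (Y\<^sup>\<dagger> Y)\<^sup>T\<close>; by Sylvester's determinant identity these have
  the same nonzero eigenvalues, hence the same entropy. The unnormalised post-measurement states
  \<open>\<surd>E\<^sub>b \<rho> \<surd>E\<^sub>b\<close> and \<open>p(b) \<rho>\<^sup>R\<^sub>b\<close> are the two reduced states of the single vector
  \<open>(\<surd>E\<^sub>b \<otimes> I) \<Psi>\<close>, because \<open>\<surd>E\<^sub>b\<close> is hermitian. So the two sums agree term by term.
  The substance lies in \<open>\<surd>E\<^sub>b\<close> being well defined: a positive operator has a unique positive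
  square root, which rests on the spectral theorem for hermitian matrices.\<close>

section \<open>Adjoints and unitary matrices\<close>

lemma adj_carrier [simp]: "A \<in> carrier_mat a b \<Longrightarrow> adj A \<in> carrier_mat b a"
  unfolding adj_def by auto

lemma adj_dims [simp]: "dim_row (adj A) = dim_col A" "dim_col (adj A) = dim_row A"
  unfolding adj_def by auto

lemma adj_index [simp]: "i < dim_col A \<Longrightarrow> j < dim_row A \<Longrightarrow> adj A $$ (i,j) = cnj (A $$ (j,i))"
  unfolding adj_def by auto

lemma adj_adj [simp]: "adj (adj A) = A"
  by (rule eq_matI) auto

lemma adj_mult: "A \<in> carrier_mat a b \<Longrightarrow> B \<in> carrier_mat b c \<Longrightarrow> adj (A * B) = adj B * adj A"
  by (rule eq_matI) (auto simp: scalar_prod_def cnj_sum mult.commute)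

lemma adj_mult_mult:
  assumes "A \<in> carrier_mat a b" "B \<in> carrier_mat b c" "C \<in> carrier_mat c d"
  shows "adj (A * B * C) = adj C * adj B * adj A"
proof -
  have "adj (A * B * C) = adj C * adj (A * B)" using assms by (intro adj_mult) auto
  also have "adj (A * B) = adj B * adj A" using assms by (intro adj_mult) auto
  also have "adj C * (adj B * adj A) = adj C * adj B * adj A"
    using assms by (intro assoc_mult_mat[symmetric]) auto
  finally show ?thesis .
qed

lemma adj_minus: "A \<in> carrier_mat a b \<Longrightarrow> B \<in> carrier_mat a b \<Longrightarrow> adj (A - B) = adj A - adj B"
  by (rule eq_matI) auto

lemma adj_mat_diag: "adj (mat_diag n d) = mat_diag n (\<lambda>i. cnj (d i))"
  by (rule eq_matI) (auto simp: mat_diag_def)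

lemma adj_four_block_mat:
  assumes "A \<in> carrier_mat a a" "B \<in> carrier_mat a b" "C \<in> carrier_mat b a" "D \<in> carrier_mat b b"
  shows "adj (four_block_mat A B C D) = four_block_mat (adj A) (adj C) (adj B) (adj D)"
  by (rule eq_matI, insert assms, auto)

lemma cscalar_mult_mat_vec_adj:
  assumes A: "A \<in> carrier_mat n k" and v: "v \<in> carrier_vec n" and w: "w \<in> carrier_vec k"
  shows "conjugate v \<bullet> (A *\<^sub>v w) = conjugate (adj A *\<^sub>v v) \<bullet> w"
proof -
  have "conjugate v \<bullet> (A *\<^sub>v w) = (\<Sum>i<n. \<Sum>j<k. cnj (v $ i) * A $$ (i,j) * w $ j)"
    using A v w by (auto simp: scalar_prod_def atLeast0LessThan sum_distrib_left ac_simps intro!: sum.cong)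
  also have "\<dots> = conjugate (adj A *\<^sub>v v) \<bullet> w"
    using A v w by (subst sum.swap)
      (auto simp: scalar_prod_def atLeast0LessThan sum_distrib_left ac_simps intro!: sum.cong)
  finally show ?thesis .
qed

definition unitary :: "nat \<Rightarrow> complex mat \<Rightarrow> bool" where
  "unitary n U \<longleftrightarrow> U \<in> carrier_mat n n \<and> adj U * U = 1\<^sub>m n"

lemma unitaryD:
  assumes "unitary n U"
  shows "U \<in> carrier_mat n n" "adj U * U = 1\<^sub>m n" "U * adj U = 1\<^sub>m n"
  using assms mat_mult_left_right_inverse[of "adj U" n U] unfolding unitary_def by auto

lemma unitary_cancel:
  assumes "unitary n U" and "B \<in> carrier_mat n k"
  shows "adj U * (U * B) = B" "U * (adj U * B) = B"
  using assms unitaryD[OF assms(1)]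
  by (simp_all flip: assoc_mult_mat[of "adj U" n n U n B k] assoc_mult_mat[of U n n "adj U" n B k])

lemma unitary_mult:
  assumes U: "unitary n U" and V: "unitary n V"
  shows "unitary n (U * V)"
proof -
  note Uc = unitaryD[OF U] and Vc = unitaryD[OF V]
  have "adj (U * V) * (U * V) = adj V * (adj U * (U * V))"
    using Uc Vc by (simp add: adj_mult assoc_mult_mat[of _ n n _ n _ n])
  also have "adj U * (U * V) = V" by (rule unitary_cancel(1)[OF U Vc(1)])
  finally show ?thesis using Uc Vc unfolding unitary_def by auto
qed

text \<open>Gram-Schmidt applied to a basis extending \<open>v\<close>, with normalised columns.\<close>
lemma unitary_with_first_col:
  assumes v: "v \<in> carrier_vec n" and v0: "v \<noteq> 0\<^sub>v n"
  shows "\<exists>W c. unitary n W \<and> col W 0 = c \<cdot>\<^sub>v v"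
proof -
  interpret cof_vec_space n "TYPE(complex)" .
  define bs where "bs = basis_completion v"
  define ws where "ws = gram_schmidt n bs"
  from basis_completion[OF v v0, folded bs_def]
  have "distinct bs" and "\<not> lin_dep (set bs)" and bs: "set bs \<subseteq> carrier_vec n"
    and hd_bs: "hd bs = v" and len_bs: "length bs = n" by auto
  from gram_schmidt_result[OF bs this(1,2) refl, folded ws_def]
  have ws: "set ws \<subseteq> carrier_vec n" and orth: "corthogonal ws" and len: "length ws = n"
    by (auto simp: len_bs)
  have n: "n \<noteq> 0" using v v0 by auto
  from hd_bs len_bs n obtain vs where "bs = v # vs" by (cases bs) auto
  with gram_schmidt_hd[OF v, of vs] have "ws ! 0 = v"
    using n len unfolding ws_def by (cases "gram_schmidt n bs") auto
  define r where "r i = Re (ws ! i \<bullet>c ws ! i)" for i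
  define c where "c i = complex_of_real (1 / sqrt (r i))" for i
  have ws_i: "ws ! i \<in> carrier_vec n" if "i < n" for i using ws len that by auto
  have self_prod: "ws ! i \<bullet>c ws ! i = of_real (r i)" "r i > 0" if i: "i < n" for i
  proof -
    have "ws ! i \<bullet>c ws ! i \<noteq> 0" using corthogonalD[OF orth, of i i] i len by auto
    moreover have "ws ! i \<bullet>c ws ! i \<ge> 0" by (rule conjugate_square_ge_0_vec)
    ultimately show "ws ! i \<bullet>c ws ! i = of_real (r i)" "r i > 0"
      unfolding r_def by (auto simp: less_eq_complex_def complex_eq_iff)
  qed
  define W where "W = mat n n (\<lambda>(k,i). c i * ws ! i $ k)"
  have W: "W \<in> carrier_mat n n" unfolding W_def by auto
  have "adj W * W = 1\<^sub>m n"
  proof (rule eq_matI)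
    fix i j assume "i < dim_row (1\<^sub>m n)" "j < dim_col (1\<^sub>m n)"
    hence i: "i < n" and j: "j < n" by auto
    have "(adj W * W) $$ (i,j) = cnj (c i) * c j * (ws ! j \<bullet>c ws ! i)"
      using i j ws_i[OF i] ws_i[OF j]
      by (auto simp: W_def scalar_prod_def sum_distrib_left atLeast0LessThan ac_simps intro!: sum.cong)
    also have "\<dots> = 1\<^sub>m n $$ (i,j)"
    proof (cases "i = j")
      case True
      thus ?thesis using i self_prod[OF i] unfolding c_def
        by (simp add: of_real_mult[symmetric] del: of_real_mult)
    next
      case False
      thus ?thesis using corthogonalD[OF orth, of j i] i j len by simp
    qed
    finally show "(adj W * W) $$ (i,j) = 1\<^sub>m n $$ (i,j)" .
  qed (use W in auto)
  moreover have "col W 0 = c 0 \<cdot>\<^sub>v v"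
    using n v \<open>ws ! 0 = v\<close> unfolding W_def by (auto simp: col_def)
  ultimately show ?thesis using W unfolding unitary_def by blast
qed

section \<open>Spectral theorem for hermitian matrices\<close>

lemma mult_four_block_diag_mat:
  assumes "A1 \<in> carrier_mat a a" "A2 \<in> carrier_mat b b" "B1 \<in> carrier_mat a a" "B2 \<in> carrier_mat b b"
  shows "four_block_mat A1 (0\<^sub>m a b) (0\<^sub>m b a) A2 * four_block_mat B1 (0\<^sub>m a b) (0\<^sub>m b a) B2
    = four_block_mat (A1 * B1) (0\<^sub>m a b) (0\<^sub>m b a) (A2 * B2)"
  using assms by (subst mult_four_block_mat) auto

lemma unitary_conj_iff:
  assumes U: "unitary n U" and A: "A \<in> carrier_mat n n" and B: "B \<in> carrier_mat n n"
  shows "adj U * A * U = B \<longleftrightarrow> A = U * B * adj U"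
proof -
  note Uc = unitaryD[OF U]
  have AU: "A * U \<in> carrier_mat n n" using A Uc by auto
  have "U * (adj U * A * U) * adj U = A * U * adj U"
    using unitary_cancel(2)[OF U AU] Uc A by (simp add: assoc_mult_mat[of "adj U" n n A n U n])
  also have "\<dots> = A" using Uc A by (simp add: assoc_mult_mat[of A n n U n "adj U" n])
  finally have left: "U * (adj U * A * U) * adj U = A" .
  have BU: "B * adj U \<in> carrier_mat n n" using B Uc by auto
  have "adj U * (U * B * adj U) * U = B * adj U * U"
    using unitary_cancel(1)[OF U BU] Uc B by (simp add: assoc_mult_mat[of U n n B n "adj U" n])
  also have "\<dots> = B" using Uc B by (simp add: assoc_mult_mat[of B n n "adj U" n U n])
  finally have right: "adj U * (U * B * adj U) * U = B" .
  show ?thesis using left right by auto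
qed

lemma conj_mult_mat:
  assumes U: "U \<in> carrier_mat n n" and V: "V \<in> carrier_mat n n" and B: "B \<in> carrier_mat n n"
  shows "U * (V * B * adj V) * adj U = (U * V) * B * adj (U * V)"
proof -
  have VB: "V * B \<in> carrier_mat n n" and aU: "adj U \<in> carrier_mat n n" and aV: "adj V \<in> carrier_mat n n"
    using U V B by auto
  have "U * (V * B * adj V) * adj U = U * (V * B * adj V * adj U)"
    using U VB aV aU by (intro assoc_mult_mat[of _ n n _ n _ n]) auto
  also have "V * B * adj V * adj U = V * B * (adj V * adj U)" by (rule assoc_mult_mat[OF VB aV aU])
  also have "U * (V * B * (adj V * adj U)) = U * (V * B) * (adj V * adj U)"
    using U VB aV aU by (intro assoc_mult_mat[symmetric, of _ n n _ n _ n]) auto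
  also have "U * (V * B) = U * V * B" by (rule assoc_mult_mat[OF U V B, symmetric])
  also have "adj V * adj U = adj (U * V)" by (rule adj_mult[OF U V, symmetric])
  finally show ?thesis .
qed

lemma hermitian_deflation:
  assumes A: "A \<in> carrier_mat (Suc k) (Suc k)" and herm: "hermitian A"
  shows "\<exists>W e A'. unitary (Suc k) W \<and> A' \<in> carrier_mat k k \<and> hermitian A' \<and>
    adj W * A * W = four_block_mat (mat 1 1 (\<lambda>_. e)) (0\<^sub>m 1 k) (0\<^sub>m k 1) A'"
proof -
  obtain es where "char_poly A = (\<Prod>a\<leftarrow>es. [:- a, 1:])" and "length es = Suc k"
    using char_poly_factorized[OF A] by blast
  then obtain e where "poly (char_poly A) e = 0" by (cases es) auto
  hence "eigenvalue A e" using eigenvalue_root_char_poly[OF A] by simp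
  then obtain v where v: "v \<in> carrier_vec (Suc k)" "v \<noteq> 0\<^sub>v (Suc k)" and Av: "A *\<^sub>v v = e \<cdot>\<^sub>v v"
    unfolding eigenvalue_def eigenvector_def using A by auto
  obtain W c where W: "unitary (Suc k) W" and W0: "col W 0 = c \<cdot>\<^sub>v v"
    using unitary_with_first_col[OF v] by blast
  note Wc = unitaryD[OF W]
  define A' where "A' = adj W * A * W"
  have A': "A' \<in> carrier_mat (Suc k) (Suc k)" unfolding A'_def using Wc A by auto
  have herm': "A' $$ (i,j) = cnj (A' $$ (j,i))" if "i < Suc k" "j < Suc k" for i j
  proof -
    have "adj A' = A'" using herm Wc A unfolding A'_def hermitian_def
      by (simp add: adj_mult_mult[of _ "Suc k" "Suc k"])
    thus ?thesis using that A' by (metis adj_index carrier_matD)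
  qed
  have col0: "A' $$ (i,0) = (if i = 0 then e else 0)" if i: "i < Suc k" for i
  proof -
    have "A *\<^sub>v col W 0 = e \<cdot>\<^sub>v col W 0"
      unfolding W0 using mult_mat_vec[OF A v(1)] Av by (simp add: smult_smult_assoc mult.commute)
    have "A' $$ (i,0) = (adj W * (A * W)) $$ (i,0)"
      unfolding A'_def using assoc_mult_mat[OF adj_carrier[OF Wc(1)] A Wc(1)] by simp
    also have "\<dots> = row (adj W) i \<bullet> (A *\<^sub>v col W 0)" using i Wc A col_mult2[OF A Wc(1), of 0] by simp
    also have "\<dots> = e * (row (adj W) i \<bullet> col W 0)"
      unfolding \<open>A *\<^sub>v col W 0 = e \<cdot>\<^sub>v col W 0\<close> using Wc by (simp add: scalar_prod_smult_right)
    also have "row (adj W) i \<bullet> col W 0 = 1\<^sub>m (Suc k) $$ (i,0)"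
      using i Wc by (metis adj_carrier carrier_matD index_mult_mat(1) zero_less_Suc)
    finally show ?thesis using i by simp
  qed
  define A3 where "A3 = mat k k (\<lambda>(i,j). A' $$ (Suc i, Suc j))"
  have "hermitian A3"
    unfolding hermitian_def
  proof (rule eq_matI)
    fix i j assume "i < dim_row A3" "j < dim_col A3"
    thus "adj A3 $$ (i,j) = A3 $$ (i,j)" using herm'[of "Suc i" "Suc j"] by (simp add: A3_def)
  qed (simp_all add: A3_def)
  moreover have "A' = four_block_mat (mat 1 1 (\<lambda>_. e)) (0\<^sub>m 1 k) (0\<^sub>m k 1) A3"
  proof (rule eq_matI)
    fix i j assume "i < dim_row (four_block_mat (mat 1 1 (\<lambda>_. e)) (0\<^sub>m 1 k) (0\<^sub>m k 1) A3)"
      "j < dim_col (four_block_mat (mat 1 1 (\<lambda>_. e)) (0\<^sub>m 1 k) (0\<^sub>m k 1) A3)"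
    hence i: "i < Suc k" and j: "j < Suc k" by (auto simp: A3_def)
    consider "j = 0" | "i = 0" "j \<noteq> 0" | i' j' where "i = Suc i'" "j = Suc j'"
      by (cases i; cases j) auto
    thus "A' $$ (i,j) = four_block_mat (mat 1 1 (\<lambda>_. e)) (0\<^sub>m 1 k) (0\<^sub>m k 1) A3 $$ (i,j)"
    proof cases
      case 2
      thus ?thesis using herm'[OF i j] col0[OF j] i j by (auto simp: A3_def)
    qed (use col0 i j in \<open>auto simp: A3_def\<close>)
  qed (use A' in \<open>auto simp: A3_def\<close>)
  moreover have "A3 \<in> carrier_mat k k" unfolding A3_def by simp
  ultimately show ?thesis using W unfolding A'_def by blast
qed

theorem hermitian_spectral_decomposition:
  assumes "A \<in> carrier_mat n n" and "hermitian A"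
  shows "\<exists>U d. unitary n U \<and> A = U * mat_diag n d * adj U"
  using assms
proof (induction n arbitrary: A)
  case 0
  thus ?case by (intro exI[of _ "1\<^sub>m 0"] exI) (auto simp: unitary_def intro!: eq_matI)
next
  case (Suc k A)
  obtain W e A' where W: "unitary (Suc k) W" and A': "A' \<in> carrier_mat k k" "hermitian A'"
    and WAW: "adj W * A * W = four_block_mat (mat 1 1 (\<lambda>_. e)) (0\<^sub>m 1 k) (0\<^sub>m k 1) A'"
    using hermitian_deflation[OF Suc.prems] by blast
  obtain U' d' where U': "unitary k U'" and A'_eq: "A' = U' * mat_diag k d' * adj U'"
    using Suc.IH[OF A'] by blast
  note U'c = unitaryD[OF U']
  define P where "P = four_block_mat (1\<^sub>m 1) (0\<^sub>m 1 k) (0\<^sub>m k 1) U'"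
  have P: "P \<in> carrier_mat (Suc k) (Suc k)" and adjP: "adj P = four_block_mat (1\<^sub>m 1) (0\<^sub>m 1 k) (0\<^sub>m k 1) (adj U')"
    using U'c by (auto simp: P_def adj_four_block_mat)
  have "adj P * P = 1\<^sub>m (1 + k)"
    unfolding adjP unfolding P_def using U'c by (simp add: mult_four_block_diag_mat)
  hence P_unitary: "unitary (Suc k) P" using P unfolding unitary_def by simp
  have diag: "four_block_mat (mat 1 1 (\<lambda>_. e)) (0\<^sub>m 1 k) (0\<^sub>m k 1) (mat_diag k d')
      = mat_diag (Suc k) (case_nat e d')"
    by (rule eq_matI) (auto simp: mat_diag_def split: nat.split)
  have "four_block_mat (mat 1 1 (\<lambda>_. e)) (0\<^sub>m 1 k) (0\<^sub>m k 1) A' = P * mat_diag (Suc k) (case_nat e d') * adj P"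
    unfolding A'_eq diag[symmetric] adjP unfolding P_def using U'c by (simp add: mult_four_block_diag_mat)
  moreover have "P * mat_diag (Suc k) (case_nat e d') * adj P \<in> carrier_mat (Suc k) (Suc k)"
    using P by (auto intro!: mult_carrier_mat)
  ultimately have "A = W * (P * mat_diag (Suc k) (case_nat e d') * adj P) * adj W"
    using WAW unitary_conj_iff[OF W Suc.prems(1)] by simp
  also have "\<dots> = (W * P) * mat_diag (Suc k) (case_nat e d') * adj (W * P)"
    using unitaryD[OF W] P by (intro conj_mult_mat) auto
  finally show ?case using unitary_mult[OF W P_unitary] by blast
qed

section \<open>Positive semidefinite matrices and their square roots\<close>

definition quad_form :: "complex mat \<Rightarrow> complex vec \<Rightarrow> complex" where
  "quad_form A v = conjugate v \<bullet> (A *\<^sub>v v)"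

lemma psd_iff:
  "psd n A \<longleftrightarrow> A \<in> carrier_mat n n \<and> adj A = A \<and> (\<forall>v \<in> carrier_vec n. 0 \<le> quad_form A v)"
  unfolding psd_def hermitian_def quad_form_def by (auto simp: less_eq_complex_def)

lemma psdD:
  assumes "psd n A"
  shows "A \<in> carrier_mat n n" "adj A = A" "v \<in> carrier_vec n \<Longrightarrow> 0 \<le> quad_form A v"
  using assms unfolding psd_iff by auto

lemma mat_diag_mult_vec:
  "w \<in> carrier_vec n \<Longrightarrow> mat_diag n d *\<^sub>v w = vec n (\<lambda>i. d i * w $ i)"
  by (rule eq_vecI) (auto simp: mat_diag_def scalar_prod_def if_distrib[of "\<lambda>x. x * _"] sum.delta cong: if_cong)

lemma quad_form_conj_mat_diag:
  assumes U: "U \<in> carrier_mat n n" and v: "v \<in> carrier_vec n"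
  shows "quad_form (U * mat_diag n d * adj U) v = (\<Sum>i<n. d i * of_real ((cmod ((adj U *\<^sub>v v) $ i))\<^sup>2))"
proof -
  define w where "w = adj U *\<^sub>v v"
  have w: "w \<in> carrier_vec n" unfolding w_def using adj_carrier[OF U] v by (rule mult_mat_vec_carrier)
  have "(U * mat_diag n d * adj U) *\<^sub>v v = (U * mat_diag n d) *\<^sub>v w"
    unfolding w_def using U v by (intro assoc_mult_mat_vec[of _ n n]) auto
  also have "\<dots> = U *\<^sub>v (mat_diag n d *\<^sub>v w)" by (rule assoc_mult_mat_vec[OF U mat_diag_dim w])
  finally have "(U * mat_diag n d * adj U) *\<^sub>v v = U *\<^sub>v (mat_diag n d *\<^sub>v w)" .
  hence "quad_form (U * mat_diag n d * adj U) v = conjugate v \<bullet> (U *\<^sub>v (mat_diag n d *\<^sub>v w))"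
    unfolding quad_form_def by simp
  also have "\<dots> = conjugate w \<bullet> (mat_diag n d *\<^sub>v w)"
    unfolding w_def by (rule cscalar_mult_mat_vec_adj[OF U v mult_mat_vec_carrier[OF mat_diag_dim w[unfolded w_def]]])
  also have "\<dots> = (\<Sum>i<n. d i * (cnj (w $ i) * w $ i))"
    using w by (auto simp: mat_diag_mult_vec scalar_prod_def atLeast0LessThan ac_simps intro!: sum.cong)
  also have "\<dots> = (\<Sum>i<n. d i * of_real ((cmod (w $ i))\<^sup>2))"
    by (intro sum.cong refl) (metis complex_norm_square mult.commute)
  finally show ?thesis unfolding w_def .
qed

lemma unitary_conj_mat_diag_eigenvector:
  assumes U: "unitary n U" and i: "i < n"
  shows "(U * mat_diag n d * adj U) *\<^sub>v (U *\<^sub>v unit_vec n i) = d i \<cdot>\<^sub>v (U *\<^sub>v unit_vec n i)"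
proof -
  note Uc = unitaryD[OF U]
  have "adj U *\<^sub>v (U *\<^sub>v unit_vec n i) = unit_vec n i"
    using Uc by (simp flip: assoc_mult_mat_vec[of "adj U" n n U n])
  moreover have "mat_diag n d *\<^sub>v unit_vec n i = d i \<cdot>\<^sub>v unit_vec n i"
    by (rule eq_vecI) (auto simp: mat_diag_mult_vec unit_vec_def)
  ultimately show ?thesis
    using Uc by (simp add: assoc_mult_mat_vec[of _ n n _ n] mult_mat_vec[of U n n])
qed

lemma unitary_col_unit:
  assumes U: "unitary n U" and i: "i < n"
  shows "conjugate (U *\<^sub>v unit_vec n i) \<bullet> (U *\<^sub>v unit_vec n i) = 1"
proof -
  note Uc = unitaryD[OF U]
  have "conjugate (U *\<^sub>v unit_vec n i) \<bullet> (U *\<^sub>v unit_vec n i) = conjugate (unit_vec n i) \<bullet> unit_vec n i"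
    using cscalar_mult_mat_vec_adj[OF Uc(1), of "U *\<^sub>v unit_vec n i" "unit_vec n i"] Uc
    by (simp flip: assoc_mult_mat_vec[of "adj U" n n U n])
  thus ?thesis using i by simp
qed

lemma quad_form_unitary_conj_mat_diag:
  assumes U: "unitary n U" and i: "i < n"
  shows "quad_form (U * mat_diag n d * adj U) (U *\<^sub>v unit_vec n i) = d i"
  using unitary_conj_mat_diag_eigenvector[OF assms] unitary_col_unit[OF assms] unitaryD[OF U]
  unfolding quad_form_def by simp

lemma mat_diag_cong: "(\<And>i. i < n \<Longrightarrow> f i = g i) \<Longrightarrow> mat_diag n f = mat_diag n g"
  by (rule eq_matI) (auto simp: mat_diag_def)

lemma psd_conj_mat_diag:
  assumes U: "U \<in> carrier_mat n n" and d: "\<And>i. i < n \<Longrightarrow> 0 \<le> d i"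
  shows "psd n (U * mat_diag n (\<lambda>i. complex_of_real (d i)) * adj U)"
proof -
  let ?D = "mat_diag n (\<lambda>i. complex_of_real (d i))"
  have "adj (U * ?D * adj U) = U * ?D * adj U"
    using U by (simp add: adj_mult_mult[OF U mat_diag_dim adj_carrier[OF U]] adj_mat_diag)
  moreover have "0 \<le> quad_form (U * ?D * adj U) v" if "v \<in> carrier_vec n" for v
    unfolding quad_form_conj_mat_diag[OF U that] using d
    by (auto simp: less_eq_complex_def Re_sum Im_sum intro!: sum_nonneg)
  ultimately show ?thesis using U unfolding psd_iff by auto
qed

lemma psd_spectral_decomposition:
  assumes A: "psd n A"
  obtains U d where "unitary n U" "\<And>i. i < n \<Longrightarrow> 0 \<le> d i"
    "A = U * mat_diag n (\<lambda>i. complex_of_real (d i)) * adj U"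
proof -
  obtain U c where U: "unitary n U" and A_eq: "A = U * mat_diag n c * adj U"
    using hermitian_spectral_decomposition[of A n] psdD[OF A] unfolding hermitian_def by blast
  have c: "0 \<le> c i" if "i < n" for i
    using psdD(3)[OF A, of "U *\<^sub>v unit_vec n i"] quad_form_unitary_conj_mat_diag[OF U that] unitaryD[OF U]
    unfolding A_eq by simp
  have "mat_diag n c = mat_diag n (\<lambda>i. complex_of_real (Re (c i)))"
    using c by (intro mat_diag_cong) (auto simp: less_eq_complex_def complex_eq_iff)
  moreover have "0 \<le> Re (c i)" if "i < n" for i using c[OF that] by (simp add: less_eq_complex_def)
  ultimately show thesis using that U A_eq by metis
qed

lemma mult_unitary_conj:
  assumes U: "unitary n U" and X: "X \<in> carrier_mat n n" and Y: "Y \<in> carrier_mat n n"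
  shows "(U * X * adj U) * (U * Y * adj U) = U * (X * Y) * adj U"
proof -
  note Uc = unitaryD[OF U]
  have UX: "U * X \<in> carrier_mat n n" and YU: "Y * adj U \<in> carrier_mat n n" using Uc X Y by auto
  have "(U * X * adj U) * (U * Y * adj U) = (U * X) * (adj U * (U * (Y * adj U)))"
    using UX YU Uc Y by (simp add: assoc_mult_mat[of _ n n _ n _ n])
  also have "adj U * (U * (Y * adj U)) = Y * adj U" by (rule unitary_cancel(1)[OF U YU])
  finally show ?thesis using Uc X Y by (simp add: assoc_mult_mat[of _ n n _ n _ n])
qed

lemma psd_sqrt_exists:
  assumes "psd n E"
  shows "\<exists>R. psd n R \<and> R * R = E"
proof -
  obtain U d where U: "unitary n U" and d: "\<And>i. i < n \<Longrightarrow> 0 \<le> d i"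
    and E: "E = U * mat_diag n (\<lambda>i. complex_of_real (d i)) * adj U"
    using psd_spectral_decomposition[OF assms] by blast
  define R where "R = U * mat_diag n (\<lambda>i. complex_of_real (sqrt (d i))) * adj U"
  have "R * R = U * (mat_diag n (\<lambda>i. complex_of_real (sqrt (d i))) * mat_diag n (\<lambda>i. complex_of_real (sqrt (d i)))) * adj U"
    unfolding R_def by (rule mult_unitary_conj[OF U mat_diag_dim mat_diag_dim])
  also have "mat_diag n (\<lambda>i. complex_of_real (sqrt (d i))) * mat_diag n (\<lambda>i. complex_of_real (sqrt (d i)))
      = mat_diag n (\<lambda>i. complex_of_real (d i))"
    unfolding mat_diag_diag using d by (intro mat_diag_cong) (simp flip: of_real_mult)
  finally have "R * R = E" unfolding E .
  moreover have "psd n R" unfolding R_def using d by (intro psd_conj_mat_diag[OF unitaryD(1)[OF U]]) simp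
  ultimately show ?thesis by blast
qed

lemma quad_form_minus:
  "A \<in> carrier_mat n n \<Longrightarrow> B \<in> carrier_mat n n \<Longrightarrow> v \<in> carrier_vec n \<Longrightarrow>
    quad_form (A - B) v = quad_form A v - quad_form B v"
  unfolding quad_form_def
  by (simp add: minus_mult_distrib_mat_vec scalar_prod_minus_distrib[of _ n])

lemma difference_of_squares_mat:
  "R \<in> carrier_mat n n \<Longrightarrow> S \<in> carrier_mat n n \<Longrightarrow> R * R - S * S = R * (R - S) + (R - S) * (S :: complex mat)"
  by (rule eq_matI) (auto simp: scalar_prod_def algebra_simps sum_subtractf sum.distrib)

text \<open>If \<open>u\<close> is an eigenvector of \<open>R - S\<close> with eigenvalue \<open>d\<close>, then
  \<open>0 = u\<^sup>\<dagger>(R\<^sup>2 - S\<^sup>2)u = d (u\<^sup>\<dagger>Ru + u\<^sup>\<dagger>Su)\<close>; so \<open>d \<noteq> 0\<close> would force both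
  nonnegative forms to vanish, and then \<open>d = u\<^sup>\<dagger>Ru - u\<^sup>\<dagger>Su = 0\<close>.\<close>
lemma psd_sqrt_unique:
  assumes R: "psd n R" and S: "psd n S" and RS: "R * R = S * S"
  shows "R = S"
proof -
  note Rc = psdD[OF R] and Sc = psdD[OF S]
  define H where "H = R - S"
  have H: "H \<in> carrier_mat n n" unfolding H_def using Rc Sc by auto
  have adj_H: "adj H = H" unfolding H_def using Rc Sc by (simp add: adj_minus)
  obtain U d where U: "unitary n U" and H_eq: "H = U * mat_diag n d * adj U"
    using hermitian_spectral_decomposition[OF H] adj_H unfolding hermitian_def by blast
  have "d i = 0" if i: "i < n" for i
  proof -
    define u where "u = U *\<^sub>v unit_vec n i"
    have u: "u \<in> carrier_vec n" and cu: "conjugate u \<in> carrier_vec n"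
      unfolding u_def using unitaryD[OF U] by auto
    have Hu: "H *\<^sub>v u = d i \<cdot>\<^sub>v u"
      unfolding u_def H_eq by (rule unitary_conj_mat_diag_eigenvector[OF U i])
    have d_eq: "d i = quad_form R u - quad_form S u"
      using quad_form_unitary_conj_mat_diag[OF U i, of d] quad_form_minus[OF Rc(1) Sc(1) u]
      unfolding u_def H_eq[symmetric] H_def by simp
    have qR: "0 \<le> quad_form R u" and qS: "0 \<le> quad_form S u" using Rc(3) Sc(3) u by auto
    hence "cnj (d i) = d i" unfolding d_eq by (simp add: less_eq_complex_def complex_eq_iff)
    have "0 = conjugate u \<bullet> ((R * R - S * S) *\<^sub>v u)"
      unfolding RS using Sc u by (simp add: scalar_prod_def)
    also have "\<dots> = conjugate u \<bullet> (R *\<^sub>v (H *\<^sub>v u)) + conjugate u \<bullet> (H *\<^sub>v (S *\<^sub>v u))"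
      unfolding difference_of_squares_mat[OF Rc(1) Sc(1), folded H_def] using Rc Sc H u
      by (simp add: add_mult_distrib_mat_vec[of _ n n] scalar_prod_add_distrib[OF cu])
    also have "conjugate u \<bullet> (H *\<^sub>v (S *\<^sub>v u)) = conjugate (H *\<^sub>v u) \<bullet> (S *\<^sub>v u)"
      using cscalar_mult_mat_vec_adj[OF H u, of "S *\<^sub>v u"] adj_H Sc u by simp
    also have "\<dots> = d i * quad_form S u"
      unfolding Hu quad_form_def using u Sc \<open>cnj (d i) = d i\<close>
      by (simp add: conjugate_smult_vec smult_scalar_prod_distrib[of _ n])
    also have "conjugate u \<bullet> (R *\<^sub>v (H *\<^sub>v u)) = d i * quad_form R u"
      unfolding Hu quad_form_def using u Rc by (simp add: mult_mat_vec[of R n n])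
    finally have "d i * (quad_form R u + quad_form S u) = 0" by (simp add: algebra_simps)
    moreover have "quad_form R u + quad_form S u = 0 \<Longrightarrow> quad_form R u = 0 \<and> quad_form S u = 0"
      using qR qS by (simp add: add_nonneg_eq_0_iff)
    ultimately show "d i = 0" unfolding d_eq by auto
  qed
  hence "mat_diag n d = 0\<^sub>m n n" by (intro eq_matI) (auto simp: mat_diag_def)
  hence "H = 0\<^sub>m n n" unfolding H_eq using unitaryD[OF U] by simp
  show ?thesis
  proof (rule eq_matI)
    fix i j assume "i < dim_row S" "j < dim_col S"
    moreover from this have "(R - S) $$ (i,j) = 0"
      using \<open>H = 0\<^sub>m n n\<close> Sc unfolding H_def by simp
    ultimately show "R $$ (i,j) = S $$ (i,j)" using Rc Sc by simp
  qed (use Rc Sc in auto)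
qed

lemma mat_sqrt_psd:
  assumes "psd n E"
  shows "psd n (mat_sqrt E)" and "mat_sqrt E * mat_sqrt E = E"
proof -
  have "\<exists>!R. psd n R \<and> R * R = E" (is "\<exists>!R. ?root R")
  proof (rule ex_ex1I)
    fix R R' assume "?root R" "?root R'"
    thus "R = R'" using psd_sqrt_unique[of n R R'] by simp
  qed (rule psd_sqrt_exists[OF assms])
  hence "?root (THE R. ?root R)" by (rule theI')
  moreover have "dim_row E = n" using psdD(1)[OF assms] by simp
  ultimately show "psd n (mat_sqrt E)" "mat_sqrt E * mat_sqrt E = E"
    unfolding mat_sqrt_def by simp_all
qed

section \<open>Sylvester's identity and entropy\<close>

lemma char_poly_matrix_eq:
  fixes C :: "'a::comm_ring_1 mat"
  assumes "C \<in> carrier_mat k k"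
  shows "char_poly_matrix C = [:0,1:] \<cdot>\<^sub>m 1\<^sub>m k - map_mat (\<lambda>a. [:a:]) C"
  by (rule eq_matI, insert assms, auto simp: char_poly_matrix_def)

text \<open>Sylvester's identity: both sides are \<open>x\<^sup>m\<close> times the determinant of the block matrix
  \<open>[[x I, A], [B, I]]\<close>, eliminated once from the right and once from the left.\<close>
lemma det_smult_one_minus_mult_commute:
  fixes x :: "'a::idom"
  assumes A: "A \<in> carrier_mat n m" and B: "B \<in> carrier_mat m n"
  shows "x^m * det (x \<cdot>\<^sub>m 1\<^sub>m n - A * B) = x^n * det (x \<cdot>\<^sub>m 1\<^sub>m m - B * A)"
proof -
  define M where "M = four_block_mat (x \<cdot>\<^sub>m 1\<^sub>m n) A B (1\<^sub>m m)"
  define N1 where "N1 = four_block_mat (1\<^sub>m n) (0\<^sub>m n m) (- B) (1\<^sub>m m)"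
  define N2 where "N2 = four_block_mat (1\<^sub>m n) (0\<^sub>m n m) (- B) (x \<cdot>\<^sub>m 1\<^sub>m m)"
  have M: "M \<in> carrier_mat (n+m) (n+m)" and N1: "N1 \<in> carrier_mat (n+m) (n+m)"
    and N2: "N2 \<in> carrier_mat (n+m) (n+m)"
    unfolding M_def N1_def N2_def using A B by (auto intro: four_block_carrier_mat)
  have AB: "x \<cdot>\<^sub>m 1\<^sub>m n - A * B \<in> carrier_mat n n" and BA: "x \<cdot>\<^sub>m 1\<^sub>m m - B * A \<in> carrier_mat m m"
    using A B by auto
  have "M * N1 = four_block_mat (x \<cdot>\<^sub>m 1\<^sub>m n * 1\<^sub>m n + A * - B) (x \<cdot>\<^sub>m 1\<^sub>m n * 0\<^sub>m n m + A * 1\<^sub>m m)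
     (B * 1\<^sub>m n + 1\<^sub>m m * - B) (B * 0\<^sub>m n m + 1\<^sub>m m * 1\<^sub>m m)"
    unfolding M_def N1_def by (rule mult_four_block_mat, insert A B, auto)
  also have "\<dots> = four_block_mat (x \<cdot>\<^sub>m 1\<^sub>m n - A * B) A (0\<^sub>m m n) (1\<^sub>m m)"
    using A B by (auto simp: uminus_mult_right_mat minus_add_uminus_mat)
  finally have "det M = det (x \<cdot>\<^sub>m 1\<^sub>m n - A * B)"
    using det_mult[OF M N1] det_four_block_mat_lower_left_zero[of "x \<cdot>\<^sub>m 1\<^sub>m n - A * B" n A m "0\<^sub>m m n" "1\<^sub>m m"] A B
      det_four_block_mat_upper_right_zero[of "1\<^sub>m n" n "0\<^sub>m n m" m "- B" "1\<^sub>m m"] AB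
    unfolding N1_def by auto
  moreover have "N2 * M = four_block_mat (1\<^sub>m n * (x \<cdot>\<^sub>m 1\<^sub>m n) + 0\<^sub>m n m * B) (1\<^sub>m n * A + 0\<^sub>m n m * 1\<^sub>m m)
     (- B * (x \<cdot>\<^sub>m 1\<^sub>m n) + (x \<cdot>\<^sub>m 1\<^sub>m m) * B) (- B * A + (x \<cdot>\<^sub>m 1\<^sub>m m) * 1\<^sub>m m)"
    unfolding M_def N2_def by (rule mult_four_block_mat, insert A B, auto)
  moreover have "- B * (x \<cdot>\<^sub>m 1\<^sub>m n) + (x \<cdot>\<^sub>m 1\<^sub>m m) * B = 0\<^sub>m m n"
    and "- B * A + (x \<cdot>\<^sub>m 1\<^sub>m m) * 1\<^sub>m m = x \<cdot>\<^sub>m 1\<^sub>m m - B * A"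
    using A B by (auto intro!: eq_matI)
  ultimately have "det N2 * det (x \<cdot>\<^sub>m 1\<^sub>m n - A * B) = x^n * det (x \<cdot>\<^sub>m 1\<^sub>m m - B * A)"
    using det_mult[OF N2 M] det_four_block_mat_lower_left_zero[of "x \<cdot>\<^sub>m 1\<^sub>m n" n A m "0\<^sub>m m n" "x \<cdot>\<^sub>m 1\<^sub>m m - B * A"] A B BA
    by (auto simp: det_smult)
  moreover have "det N2 = x^m"
    unfolding N2_def using det_four_block_mat_upper_right_zero[of "1\<^sub>m n" n "0\<^sub>m n m" m "- B"] B
    by (auto simp: det_smult)
  ultimately show ?thesis by simp
qed

lemma char_poly_mult_commute:
  fixes A B :: "'a::field mat"
  assumes A: "A \<in> carrier_mat n m" and B: "B \<in> carrier_mat m n"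
  shows "[:0,1:]^m * char_poly (A * B) = [:0,1:]^n * char_poly (B * A)"
proof -
  define LA where "LA = map_mat (\<lambda>a. [:a:]) A"
  define LB where "LB = map_mat (\<lambda>a. [:a:]) B"
  have LA: "LA \<in> carrier_mat n m" and LB: "LB \<in> carrier_mat m n" using A B by (auto simp: LA_def LB_def)
  have "char_poly (A * B) = det ([:0,1:] \<cdot>\<^sub>m 1\<^sub>m n - LA * LB)"
    using char_poly_matrix_eq[of "A * B" n] A B map_poly_mult(1)[OF A B]
    unfolding char_poly_def LA_def LB_def by auto
  moreover have "char_poly (B * A) = det ([:0,1:] \<cdot>\<^sub>m 1\<^sub>m m - LB * LA)"
    using char_poly_matrix_eq[of "B * A" m] A B map_poly_mult(1)[OF B A]
    unfolding char_poly_def LA_def LB_def by auto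
  ultimately show ?thesis using det_smult_one_minus_mult_commute[OF LA LB] by simp
qed

text \<open>Padding the spectrum with zeros does not change the entropy, as \<open>0 ln 0 = 0\<close>.\<close>
lemma vn_entropy_eqI:
  assumes P: "P \<in> carrier_mat n n" and Q: "Q \<in> carrier_mat m m"
    and eq: "[:0,1:]^m * char_poly P = [:0,1:]^n * char_poly Q"
  shows "vn_entropy P = vn_entropy Q"
proof -
  have roots_x_power: "proots ([:0,1::complex:]^k) = replicate_mset k 0" for k
    using proots_linear_factor[of 0] by (simp add: proots_power repeat_mset_replicate_mset)
  have "char_poly P \<noteq> 0" "char_poly Q \<noteq> 0"
    using degree_monic_char_poly[OF P] degree_monic_char_poly[OF Q] by auto
  hence "replicate_mset m 0 + proots (char_poly P) = replicate_mset n 0 + proots (char_poly Q)"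
    using arg_cong[OF eq, of proots] by (simp add: proots_mult roots_x_power)
  hence "(\<Sum>x\<in># replicate_mset m 0 + proots (char_poly P). xlnx (Re x))
      = (\<Sum>x\<in># replicate_mset n 0 + proots (char_poly Q). xlnx (Re x))" by simp
  thus ?thesis unfolding vn_entropy_def by (simp add: xlnx_def)
qed

lemma vn_entropy_mult_commute:
  assumes A: "A \<in> carrier_mat n m" and B: "B \<in> carrier_mat m n"
  shows "vn_entropy (A * B) = vn_entropy (B * A)"
  using A B char_poly_mult_commute[OF A B] by (intro vn_entropy_eqI[of _ n _ m]) auto

lemma vn_entropy_transpose:
  "A \<in> carrier_mat n n \<Longrightarrow> vn_entropy (transpose_mat A) = vn_entropy A"
  unfolding vn_entropy_def by (simp add: char_poly_transpose_mat)

section \<open>Reduced states of bipartite pure states\<close>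

lemma index_pair_less: "i < n \<Longrightarrow> j < m \<Longrightarrow> i * m + j < n * (m::nat)"
proof -
  assume "i < n" "j < m"
  hence "i * m + j < (i + 1) * m" and "(i + 1) * m \<le> n * m" by (simp, intro mult_le_mono1, simp)
  thus ?thesis by linarith
qed

lemma sum_lessThan_mult: "(\<Sum>a<n*m. f a) = (\<Sum>i<n. \<Sum>j<m. f (i*m+j::nat))"
proof -
  have "sum f {i*m..<i*m+m} = (\<Sum>j<m. f (i*m+j))" for i
    by (rule sum.reindex_bij_witness[of _ "\<lambda>j. i*m+j" "\<lambda>a. a - i*m"]) auto
  thus ?thesis by (simp flip: sum.nat_group)
qed

definition reshape :: "nat \<Rightarrow> nat \<Rightarrow> complex vec \<Rightarrow> complex mat" where
  "reshape n m y = mat n m (\<lambda>(i,j). y $ (i*m+j))"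

lemma ptrace_R_proj:
  "y \<in> carrier_vec (n*m) \<Longrightarrow> ptrace_R n m (proj y) = reshape n m y * adj (reshape n m y)"
  by (rule eq_matI)
    (auto simp: ptrace_R_def proj_def reshape_def scalar_prod_def index_pair_less atLeast0LessThan)

lemma ptrace_S_proj:
  "y \<in> carrier_vec (n*m) \<Longrightarrow> ptrace_S n m (proj y) = transpose_mat (adj (reshape n m y) * reshape n m y)"
  by (rule eq_matI)
    (auto simp: ptrace_S_def proj_def reshape_def scalar_prod_def index_pair_less atLeast0LessThan
      mult.commute[where 'a = complex])

lemma transpose_smult_mat: "transpose_mat (c \<cdot>\<^sub>m A) = c \<cdot>\<^sub>m transpose_mat A"
  by (rule eq_matI) auto

lemma vn_entropy_smult_ptrace_proj:
  assumes "y \<in> carrier_vec (n*m)"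
  shows "vn_entropy (c \<cdot>\<^sub>m ptrace_R n m (proj y)) = vn_entropy (c \<cdot>\<^sub>m ptrace_S n m (proj y))"
proof -
  define Y where "Y = reshape n m y"
  have Y: "Y \<in> carrier_mat n m" unfolding Y_def reshape_def by simp
  have YY: "c \<cdot>\<^sub>m (adj Y * Y) \<in> carrier_mat m m" using Y by auto
  have "vn_entropy (c \<cdot>\<^sub>m ptrace_R n m (proj y)) = vn_entropy ((c \<cdot>\<^sub>m Y) * adj Y)"
    using assms Y by (simp add: ptrace_R_proj Y_def[symmetric] mult_smult_assoc_mat[OF Y adj_carrier[OF Y]])
  also have "\<dots> = vn_entropy (adj Y * (c \<cdot>\<^sub>m Y))"
    using Y by (intro vn_entropy_mult_commute[of _ n m]) auto
  also have "\<dots> = vn_entropy (c \<cdot>\<^sub>m ptrace_S n m (proj y))"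
    using assms Y vn_entropy_transpose[OF YY]
    by (simp add: ptrace_S_proj Y_def[symmetric] mult_smult_distrib[OF adj_carrier[OF Y] Y] transpose_smult_mat)
  finally show ?thesis .
qed

lemma tensor_one_carrier: "R \<in> carrier_mat n n \<Longrightarrow> tensor_mat R (1\<^sub>m m) \<in> carrier_mat (n*m) (n*m)"
  by (simp add: tensor_mat_def)

lemma adj_tensor_one:
  assumes R: "R \<in> carrier_mat n n"
  shows "adj (tensor_mat R (1\<^sub>m m)) = tensor_mat (adj R) (1\<^sub>m m)"
proof (rule eq_matI)
  fix a b assume "a < dim_row (tensor_mat (adj R) (1\<^sub>m m))" "b < dim_col (tensor_mat (adj R) (1\<^sub>m m))"
  hence a: "a < n*m" and b: "b < n*m" using R by (auto simp: tensor_mat_def)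
  hence "a div m < n" "b div m < n" "0 < m" by (auto simp: less_mult_imp_div_less intro: gr0I)
  thus "adj (tensor_mat R (1\<^sub>m m)) $$ (a, b) = tensor_mat (adj R) (1\<^sub>m m) $$ (a, b)"
    using a b R by (auto simp: tensor_mat_def)
qed (use R in \<open>auto simp: tensor_mat_def\<close>)

lemma reshape_tensor_one_mult_vec:
  assumes R: "R \<in> carrier_mat n n" and y: "y \<in> carrier_vec (n*m)"
  shows "reshape n m (tensor_mat R (1\<^sub>m m) *\<^sub>v y) = R * reshape n m y"
proof (rule eq_matI)
  fix i j assume "i < dim_row (R * reshape n m y)" "j < dim_col (R * reshape n m y)"
  hence i: "i < n" and j: "j < m" using R by (auto simp: reshape_def)
  have "(tensor_mat R (1\<^sub>m m) *\<^sub>v y) $ (i*m+j)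
      = (\<Sum>k<n. \<Sum>l<m. tensor_mat R (1\<^sub>m m) $$ (i*m+j, k*m+l) * y $ (k*m+l))"
    using i j R y by (simp add: tensor_mat_def scalar_prod_def index_pair_less atLeast0LessThan sum_lessThan_mult)
  also have "\<dots> = (\<Sum>k<n. \<Sum>l<m. if l = j then R $$ (i,k) * y $ (k*m+l) else 0)"
    using i j R by (intro sum.cong refl) (auto simp: tensor_mat_def index_pair_less)
  also have "\<dots> = (R * reshape n m y) $$ (i,j)"
    using i j R by (simp add: reshape_def scalar_prod_def atLeast0LessThan)
  finally show "reshape n m (tensor_mat R (1\<^sub>m m) *\<^sub>v y) $$ (i,j) = (R * reshape n m y) $$ (i,j)"
    using i j by (simp add: reshape_def)
qed (use R in \<open>auto simp: reshape_def tensor_mat_def\<close>)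

lemma proj_sandwich:
  assumes T: "T \<in> carrier_mat N N" and y: "y \<in> carrier_vec N"
  shows "T * proj y * adj T = proj (T *\<^sub>v y)"
proof (rule eq_matI)
  fix a b assume "a < dim_row (proj (T *\<^sub>v y))" "b < dim_col (proj (T *\<^sub>v y))"
  hence a: "a < N" and b: "b < N" using T by (auto simp: proj_def)
  have "(T * proj y * adj T) $$ (a,b) = (\<Sum>d<N. (\<Sum>c<N. T $$ (a,c) * (y $ c * cnj (y $ d))) * cnj (T $$ (b,d)))"
    using a b T y by (auto simp: proj_def scalar_prod_def atLeast0LessThan intro!: sum.cong)
  also have "\<dots> = (\<Sum>c<N. T $$ (a,c) * y $ c) * cnj (\<Sum>d<N. T $$ (b,d) * y $ d)"
    by (simp add: sum_distrib_left sum_distrib_right ac_simps)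
  also have "\<dots> = proj (T *\<^sub>v y) $$ (a,b)"
    using a b T y by (auto simp: proj_def mult_mat_vec_def scalar_prod_def atLeast0LessThan)
  finally show "(T * proj y * adj T) $$ (a,b) = proj (T *\<^sub>v y) $$ (a,b)" .
qed (use T y in \<open>auto simp: proj_def\<close>)

lemma ptrace_R_tensor_one_sandwich:
  assumes R: "R \<in> carrier_mat n n" and y: "y \<in> carrier_vec (n*m)"
  shows "R * ptrace_R n m (proj y) * adj R = ptrace_R n m (proj (tensor_mat R (1\<^sub>m m) *\<^sub>v y))"
proof -
  define Y where "Y = reshape n m y"
  have Y: "Y \<in> carrier_mat n m" unfolding Y_def reshape_def by simp
  have Ty: "tensor_mat R (1\<^sub>m m) *\<^sub>v y \<in> carrier_vec (n*m)"
    by (rule mult_mat_vec_carrier[OF tensor_one_carrier[OF R] y])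
  have "R * (Y * adj Y) * adj R = R * Y * adj Y * adj R"
    using assoc_mult_mat[OF R Y adj_carrier[OF Y]] by simp
  also have "\<dots> = (R * Y) * adj (R * Y)"
    unfolding adj_mult[OF R Y] using R Y by (intro assoc_mult_mat) auto
  finally show ?thesis
    using R y Ty by (simp add: ptrace_R_proj Y_def reshape_tensor_one_mult_vec)
qed

lemma vn_entropy_smult_local_sandwich:
  assumes R: "R \<in> carrier_mat n n" and adj_R: "adj R = R" and y: "y \<in> carrier_vec (n*m)"
  shows "vn_entropy (c \<cdot>\<^sub>m (R * ptrace_R n m (proj y) * R))
    = vn_entropy (c \<cdot>\<^sub>m ptrace_S n m (tensor_mat R (1\<^sub>m m) * proj y * tensor_mat R (1\<^sub>m m)))"
proof -
  define T where "T = tensor_mat R (1\<^sub>m m)"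
  have T: "T \<in> carrier_mat (n*m) (n*m)" and adj_T: "adj T = T"
    unfolding T_def adj_tensor_one[OF R] adj_R by (rule tensor_one_carrier[OF R], rule refl)
  have "R * ptrace_R n m (proj y) * R = ptrace_R n m (proj (T *\<^sub>v y))"
    using ptrace_R_tensor_one_sandwich[OF R y] adj_R unfolding T_def by simp
  moreover have "T * proj y * T = proj (T *\<^sub>v y)"
    using proj_sandwich[OF T y] adj_T by simp
  ultimately show ?thesis
    using vn_entropy_smult_ptrace_proj[OF mult_mat_vec_carrier[OF T y]] unfolding T_def by simp
qed

theorem theorem4p6:
  fixes n m :: nat and \<rho> :: "complex mat" and B :: "'b set" and E :: "'b \<Rightarrow> complex mat"
    and \<Psi> :: "complex vec"
  assumes rho: "density_op n \<rho>"
    and E: "povm n B E"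
    and Psi: "\<Psi> \<in> carrier_vec (n * m)"
    and pur: "ptrace_R n m (proj \<Psi>) = \<rho>"
  defines "\<rho>b \<equiv> (\<lambda>b. (1 / of_real (prob E \<rho> b)) \<cdot>\<^sub>m (mat_sqrt (E b) * \<rho> * mat_sqrt (E b)))"
    and "\<rho>R \<equiv> ptrace_S n m (proj \<Psi>)"
    and "\<rho>Rb \<equiv> (\<lambda>b. (1 / of_real (prob E \<rho> b)) \<cdot>\<^sub>m
           ptrace_S n m (tensor_mat (mat_sqrt (E b)) (1\<^sub>m m) * proj \<Psi> *
                         tensor_mat (mat_sqrt (E b)) (1\<^sub>m m)))"
  shows "vn_entropy \<rho> - (\<Sum>b\<in>{b\<in>B. prob E \<rho> b > 0}. prob E \<rho> b * vn_entropy (\<rho>b b))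
       = vn_entropy \<rho>R - (\<Sum>b\<in>{b\<in>B. prob E \<rho> b > 0}. prob E \<rho> b * vn_entropy (\<rho>Rb b))"
proof -
  \<comment> \<open>The terms agree for every \<open>b\<close>.\<close>
  have "1 \<cdot>\<^sub>m A = A" for A :: "complex mat" by (rule eq_matI) auto
  hence total: "vn_entropy \<rho> = vn_entropy \<rho>R"
    using vn_entropy_smult_ptrace_proj[OF Psi, of 1] unfolding pur \<rho>R_def by simp
  have "vn_entropy (\<rho>b b) = vn_entropy (\<rho>Rb b)" if "b \<in> B" for b
  proof -
    have "psd n (mat_sqrt (E b))" using E that by (intro mat_sqrt_psd) (auto simp: povm_def)
    thus ?thesis unfolding \<rho>b_def \<rho>Rb_def pur[symmetric]
      by (intro vn_entropy_smult_local_sandwich Psi) (auto dest: psdD)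
  qed
  hence "(\<Sum>b\<in>{b\<in>B. prob E \<rho> b > 0}. prob E \<rho> b * vn_entropy (\<rho>b b))
      = (\<Sum>b\<in>{b\<in>B. prob E \<rho> b > 0}. prob E \<rho> b * vn_entropy (\<rho>Rb b))"
    by (intro sum.cong) auto
  with total show ?thesis by simp
qed

end
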